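(* Let $\alpha\in(1,2)$ and let $p\ge3$ be an odd integer. Then $$f^{p,0}(\theta)\le f^{p,\alpha}(\theta)\le f^{p,2}(\theta)\qquad\text{for all }\theta\text{ with }|\theta|\in[1,\pi].$$
   Context: For real $\beta\ge0$ and integer $p\ge 2$, $f^{p,\beta}(\theta)=\sum_{l\in\mathbb Z}|\theta+2l\pi|^{\beta}\left(\frac{\sin(\theta/2+l\pi)}{\theta/2+l\pi}\right)^{p+1}$ (with $\frac{\sin x}{x}:=1$ at $x=0$ and $|x|^0:=1$); in particular $f^{p,0}$ and $f^{p,2}$ are given by this formula with $\beta=0$ and $\beta=2$. *)

theory Defs
  imports "HOL-Analysis.Analysis"
begin

definition sinc :: "real \<Rightarrow> real" where
  "sinc x = (if x = 0 then 1 else sin x / x)"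

definition abs_pow :: "real \<Rightarrow> real \<Rightarrow> real" where
  "abs_pow x \<beta> = (if \<beta> = 0 then 1 else \<bar>x\<bar> powr \<beta>)"

definition f_pb :: "nat \<Rightarrow> real \<Rightarrow> real \<Rightarrow> real" where
  "f_pb p \<beta> \<theta> = (\<Sum>\<^sub>\<infinity>l\<in>(UNIV::int set).
      abs_pow (\<theta> + 2 * of_int l * pi) \<beta> * (sinc (\<theta> / 2 + of_int l * pi)) ^ (p + 1))"

end

theory Submission
  imports Defs
begin

text \<open>For \<open>1 \<le> \<bar>\<theta>\<bar> \<le> pi\<close> every node \<open>\<theta> + 2 l pi\<close> has modulus at least 1, so its
  \<open>\<beta>\<close>-th power is nondecreasing in \<open>\<beta>\<close>; since \<open>p + 1\<close> is even the sinc factors are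
  nonnegative, and the inequalities hold term by term. For \<open>\<beta> \<le> 2\<close> the series converge
  because \<open>p + 1 \<ge> 4\<close> makes the terms \<open>O(l\<^sup>-\<^sup>2)\<close>.\<close>

lemma summable_inverse_one_plus_square:
  "summable (\<lambda>n::nat. 1 / (1 + real n ^ 2))"
proof (rule summable_comparison_test' [OF inverse_power_summable [of 2]])
  fix n :: nat
  assume "1 \<le> n"
  then show "norm (1 / (1 + real n ^ 2)) \<le> inverse (real n ^ 2)"
    by (simp add: inverse_eq_divide frac_le)
qed simp

lemma summable_on_inverse_one_plus_square_int:
  "(\<lambda>l::int. 1 / (1 + real_of_int l ^ 2)) summable_on UNIV"
proof -
  let ?g = "\<lambda>l::int. 1 / (1 + real_of_int l ^ 2)"
  have "?g summable_on range int" "?g summable_on range (\<lambda>n. - int n)"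
    using summable_inverse_one_plus_square
    by (subst summable_on_reindex; force simp: inj_def o_def summable_on_UNIV_nonneg_real_iff)+
  then have "?g summable_on (range int \<union> range (\<lambda>n. - int n))"
    by (rule summable_on_union)
  moreover have "range int \<union> range (\<lambda>n. - int n) = (UNIV :: int set)"
  proof -
    have "l \<in> range int \<union> range (\<lambda>n. - int n)" for l :: int
      by (cases "0 \<le> l") (auto intro: image_eqI [of l int "nat l"] image_eqI [of l _ "nat (- l)"])
    then show ?thesis by blast
  qed
  ultimately show ?thesis by simp
qed

lemma abs_sinc_le_one: "\<bar>sinc y\<bar> \<le> 1"
  using abs_sin_x_le_abs_x [of y] by (simp add: sinc_def abs_divide)

lemma abs_sinc_half_le:
  assumes "x \<noteq> 0"
  shows "\<bar>sinc (x / 2)\<bar> \<le> 2 / \<bar>x\<bar>"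
proof -
  have "\<bar>sinc (x / 2)\<bar> = 2 * \<bar>sin (x / 2)\<bar> / \<bar>x\<bar>"
    using assms by (simp add: sinc_def abs_divide)
  also have "\<dots> \<le> 2 / \<bar>x\<bar>"
    by (simp add: divide_right_mono abs_sin_le_one)
  finally show ?thesis .
qed

lemma sinc_half_power_le:
  assumes "x \<noteq> 0" "3 \<le> p" "odd p"
  shows "sinc (x / 2) ^ (p + 1) \<le> (2 / \<bar>x\<bar>) ^ 4"
proof -
  have "sinc (x / 2) ^ (p + 1) = \<bar>sinc (x / 2)\<bar> ^ (p + 1)"
    by (rule power_even_abs [symmetric]) (use assms(3) in simp)
  also have "\<dots> \<le> \<bar>sinc (x / 2)\<bar> ^ 4"
    using assms(2) abs_sinc_le_one by (intro power_decreasing) auto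
  also have "\<dots> \<le> (2 / \<bar>x\<bar>) ^ 4"
    using abs_sinc_half_le [OF assms(1)] by (intro power_mono) auto
  finally show ?thesis .
qed

lemma abs_pow_nonneg: "0 \<le> abs_pow x \<beta>"
  by (simp add: abs_pow_def)

lemma abs_pow_two: "abs_pow x 2 = x ^ 2"
  by (cases "x = 0") (simp_all add: abs_pow_def powr_realpow)

lemma abs_pow_mono:
  assumes "1 \<le> \<bar>x\<bar>" "0 \<le> \<beta>" "\<beta> \<le> \<gamma>"
  shows "abs_pow x \<beta> \<le> abs_pow x \<gamma>"
proof (cases "\<beta> = 0")
  case True
  then show ?thesis
    using assms by (simp add: abs_pow_def ge_one_powr_ge_zero)
next
  case False
  then show ?thesis
    using assms by (simp add: abs_pow_def powr_mono)
qed

lemma abs_shifted_angle_ge: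
  fixes \<theta> :: real and l :: int
  assumes "1 \<le> \<bar>\<theta>\<bar>" "\<bar>\<theta>\<bar> \<le> pi"
  shows "1 \<le> \<bar>\<theta> + 2 * of_int l * pi\<bar>" and "\<bar>of_int l\<bar> \<le> \<bar>\<theta> + 2 * of_int l * pi\<bar>"
proof -
  have "max 1 \<bar>of_int l\<bar> \<le> \<bar>\<theta> + 2 * of_int l * pi\<bar>"
  proof (cases "l = 0")
    case False
    then have l: "1 \<le> \<bar>real_of_int l\<bar>" by simp
    have "max 1 \<bar>of_int l\<bar> \<le> \<bar>of_int l\<bar> * pi"
      using l pi_ge_two by (simp add: mult_le_cancel_left1)
    also have "\<dots> \<le> 2 * \<bar>of_int l\<bar> * pi - pi"
      using l by (simp add: algebra_simps)
    also have "\<dots> \<le> \<bar>\<theta> + 2 * of_int l * pi\<bar>"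
      using assms(2) abs_triangle_ineq4 [of "\<theta> + 2 * of_int l * pi" \<theta>]
      by (simp add: abs_mult)
    finally show ?thesis .
  qed (use assms(1) in simp)
  then show "1 \<le> \<bar>\<theta> + 2 * of_int l * pi\<bar>" and "\<bar>of_int l\<bar> \<le> \<bar>\<theta> + 2 * of_int l * pi\<bar>"
    by simp_all
qed

lemma sinc_power_nonneg: "odd p \<Longrightarrow> 0 \<le> sinc y ^ (p + 1)"
  by (rule zero_le_even_power) simp

definition f_pb_term :: "nat \<Rightarrow> real \<Rightarrow> real \<Rightarrow> int \<Rightarrow> real" where
  "f_pb_term p \<beta> \<theta> l =
     abs_pow (\<theta> + 2 * of_int l * pi) \<beta> * sinc ((\<theta> + 2 * of_int l * pi) / 2) ^ (p + 1)"

lemma f_pb_eq_infsum_term: "f_pb p \<beta> \<theta> = (\<Sum>\<^sub>\<infinity>l. f_pb_term p \<beta> \<theta> l)"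
  by (simp add: f_pb_def f_pb_term_def add_divide_distrib)

lemma f_pb_term_nonneg: "odd p \<Longrightarrow> 0 \<le> f_pb_term p \<beta> \<theta> l"
  unfolding f_pb_term_def by (intro mult_nonneg_nonneg abs_pow_nonneg sinc_power_nonneg)

lemma f_pb_term_mono:
  assumes "odd p" "1 \<le> \<bar>\<theta>\<bar>" "\<bar>\<theta>\<bar> \<le> pi" "0 \<le> \<beta>" "\<beta> \<le> \<gamma>"
  shows "f_pb_term p \<beta> \<theta> l \<le> f_pb_term p \<gamma> \<theta> l"
  unfolding f_pb_term_def
  using assms abs_shifted_angle_ge(1)
  by (intro mult_right_mono abs_pow_mono sinc_power_nonneg) auto

lemma f_pb_term_two_le:
  assumes "3 \<le> p" "odd p" "1 \<le> \<bar>\<theta>\<bar>" "\<bar>\<theta>\<bar> \<le> pi"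
  shows "f_pb_term p 2 \<theta> l \<le> 32 * (1 / (1 + real_of_int l ^ 2))"
proof -
  define x where "x = \<theta> + 2 * of_int l * pi"
  have x1: "1 \<le> \<bar>x\<bar>" and lx: "\<bar>of_int l\<bar> \<le> \<bar>x\<bar>"
    using abs_shifted_angle_ge [OF assms(3,4)] unfolding x_def by blast+
  then have "x \<noteq> 0" by auto
  have "1 + real_of_int l ^ 2 \<le> 2 * x ^ 2"
    using abs_le_square_iff [of 1 x] abs_le_square_iff [of "of_int l" x] x1 lx by simp
  moreover have "0 < x ^ 2" "0 < 1 + real_of_int l ^ 2"
    using \<open>x \<noteq> 0\<close> by (simp_all add: add_pos_nonneg)
  ultimately have "16 / x ^ 2 \<le> 32 * (1 / (1 + real_of_int l ^ 2))"
    by (simp add: divide_simps)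
  moreover have "f_pb_term p 2 \<theta> l \<le> 16 / x ^ 2"
  proof -
    have "f_pb_term p 2 \<theta> l = x ^ 2 * sinc (x / 2) ^ (p + 1)"
      by (simp add: f_pb_term_def x_def abs_pow_two)
    also have "\<dots> \<le> x ^ 2 * (2 / \<bar>x\<bar>) ^ 4"
      using sinc_half_power_le [OF \<open>x \<noteq> 0\<close> assms(1,2)] by (simp add: mult_left_mono)
    also have "\<dots> = 16 / x ^ 2"
      using \<open>x \<noteq> 0\<close> by (simp add: field_simps power_divide eval_nat_numeral abs_mult_self)
    finally show ?thesis .
  qed
  ultimately show ?thesis by linarith
qed

lemma f_pb_term_summable:
  assumes "3 \<le> p" "odd p" "1 \<le> \<bar>\<theta>\<bar>" "\<bar>\<theta>\<bar> \<le> pi" "0 \<le> \<beta>" "\<beta> \<le> 2"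
  shows "f_pb_term p \<beta> \<theta> summable_on UNIV"
proof -
  have "f_pb_term p 2 \<theta> summable_on UNIV"
    using assms f_pb_term_two_le f_pb_term_nonneg
    by (intro summable_on_comparison_test [OF summable_on_cmult_right
          [OF summable_on_inverse_one_plus_square_int]]) auto
  then show ?thesis
    by (rule summable_on_comparison_test) (use assms f_pb_term_mono f_pb_term_nonneg in auto)
qed

lemma f_pb_mono_exponent:
  assumes "3 \<le> p" "odd p" "1 \<le> \<bar>\<theta>\<bar>" "\<bar>\<theta>\<bar> \<le> pi" "0 \<le> \<beta>" "\<beta> \<le> \<gamma>" "\<gamma> \<le> 2"
  shows "f_pb p \<beta> \<theta> \<le> f_pb p \<gamma> \<theta>"
  unfolding f_pb_eq_infsum_term
  using assms by (intro infsum_mono f_pb_term_summable f_pb_term_mono) auto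

theorem proposition5p4:
  fixes \<alpha> \<theta> :: real and p :: nat
  assumes "1 < \<alpha>" and "\<alpha> < 2"
    and "p \<ge> 3" and "odd p"
    and "1 \<le> \<bar>\<theta>\<bar>" and "\<bar>\<theta>\<bar> \<le> pi"
  shows "f_pb p 0 \<theta> \<le> f_pb p \<alpha> \<theta> \<and> f_pb p \<alpha> \<theta> \<le> f_pb p 2 \<theta>"
  using assms f_pb_mono_exponent [of p \<theta>] by simp

end
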